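(* Fix an execution path of naive-fvs$(G,k,\emptyset)$ that leads to a solution, with $V_-=\{x_1,\dots,x_s\}$, $F'$, $d^*$ and $\delta$ as defined in the context. For every $i\in\{1,\dots,s\}$, $\sum_{u\in F'}\delta(u,x_i)\le d^*(x_i)$.
   Context: All graphs are finite, simple and undirected; $d_G(v)$ denotes the degree of $v$ in $G$ (taken to be $0$ if $v\notin V(G)$), $G-S$ denotes deletion of a vertex set $S$, and $G[S]$ the induced subgraph. A feedback vertex set of $G$ is a set $V_-\subseteq V(G)$ such that $G-V_-$ is a forest. Algorithm naive-fvs$(G,k,F)$ (with $k$ an integer and $F\subseteq V(G)$ inducing a forest) returns a set of vertices or ``NO'' as follows (all choices among several candidates are arbitrary; degrees are in the current graph $G$): (0) If $k<0$ return NO; if $V(G)=\emptyset$ return $\emptyset$. (1) If some vertex $v$ has degree less than $2$, return naive-fvs$(G-\{v\},k,F\setminus\{v\})$. (2) If some $v\in V(G)\setminus F$ has two neighbors in the same connected component of $G[F]$, let $X=$ naive-fvs$(G-\{v\},k-1,F)$ and return $X\cup\{v\}$ (NO if $X$ is NO). (3) Pick $v\in V(G)\setminus F$ of maximum degree. (4) If $d(v)=2$: set $X=\emptyset$; while $G$ contains a cycle $C$, take any vertex $x$ of $C$ not in $F$, add $x$ to $X$ and delete $x$ from $G$; then return $X$ if $|X|\le k$, else NO. (5) Let $X=$ naive-fvs$(G-\{v\},k-1,F)$; if $X$ is not NO, return $X\cup\{v\}$. (6) Return naive-fvs$(G,k,F\cup\{v\})$. An execution path is a sequence of calls $c_0,c_1,\dots,c_t$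 where $c_0=$ naive-fvs$(G,k,\emptyset)$; for each $j<t$, $c_{j+1}$ is the recursive call made by $c_j$ in step 1 or step 2, or, if $c_j$ reaches step 5, either the call of step 5 or the call of step 6 (the latter considered even if the algorithm would not actually make it); and $c_t$ terminates in step 0 or step 4 without recursion. It leads to a solution if $c_t$ returns a set (not NO). Along the path, vertices are deleted from the current graph one at a time (in steps 1, 2, 5 and in the loop of step 4 of $c_t$). $V_-$ denotes the set of vertices deleted in step 2, in step 5 (when the path follows the step-5 call), and in the loop of step 4 of $c_t$; $F'$ denotes the set of vertices added to $F$ by step 6 (when the path follows the step-6 call). Let $x_1,\dots,x_s$ be the vertices of $V_-$ in the order they are deleted. For $v\in V_-\cup F'$, $d^*(v)$ is the degree of $v$ in the current graph at the moment $v$ is deleted (for $v\in V_-$) or moved into $F$ (for $v\in F'$). Let $G_i$ and $F_i$ be the current graph and current set $F$ immediately before $x_i$ is deleted, and let $G_{s+1}$ be the current graph at the end of the path. For $u\in F'$ and $1\le i\le s$, the number of effective decrements of $u$ incurred by $x_i$ is $\delta(u,x_i)=\max\{d_{G_i}(u),2\}-\max\{d_{G_{i+1}}(u),2\}$ if $u\in F_i$, and $\delta(u,x_i)=0$ otherwise. *)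

theory Defs
  imports Main
begin

text \<open>A graph is a pair (vertex set, edge set); edges are 2-element vertex sets.\<close>
type_synonym 'a graph = "'a set \<times> 'a set set"

definition verts :: "'a graph \<Rightarrow> 'a set" where "verts G = fst G"
definition edges :: "'a graph \<Rightarrow> 'a set set" where "edges G = snd G"

definition simple_graph :: "'a graph \<Rightarrow> bool" where
  "simple_graph G \<longleftrightarrow> finite (verts G) \<and>
     (\<forall>e\<in>edges G. \<exists>u v. e = {u, v} \<and> u \<noteq> v \<and> u \<in> verts G \<and> v \<in> verts G)"

definition nbrs :: "'a graph \<Rightarrow> 'a \<Rightarrow> 'a set" where
  "nbrs G v = {u. {u, v} \<in> edges G}"

text \<open>Degree; it is 0 for vertices not in the graph (no incident edges).\<close>
definition deg :: "'a graph \<Rightarrow> 'a \<Rightarrow> nat" where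
  "deg G v = (if v \<in> verts G then card (nbrs G v) else 0)"

definition del_verts :: "'a graph \<Rightarrow> 'a set \<Rightarrow> 'a graph" where
  "del_verts G S = (verts G - S, {e \<in> edges G. e \<inter> S = {}})"

definition induced :: "'a graph \<Rightarrow> 'a set \<Rightarrow> 'a graph" where
  "induced G S = (verts G \<inter> S, {e \<in> edges G. e \<subseteq> S})"

definition is_cycle :: "'a graph \<Rightarrow> 'a list \<Rightarrow> bool" where
  "is_cycle G cs \<longleftrightarrow> distinct cs \<and> length cs \<ge> 3 \<and> set cs \<subseteq> verts G \<and>
     (\<forall>i < length cs. {cs ! i, cs ! ((i + 1) mod length cs)} \<in> edges G)"

definition has_cycle :: "'a graph \<Rightarrow> bool" where
  "has_cycle G \<longleftrightarrow> (\<exists>cs. is_cycle G cs)"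

definition connected_in :: "'a graph \<Rightarrow> 'a \<Rightarrow> 'a \<Rightarrow> bool" where
  "connected_in G u w \<longleftrightarrow> u \<in> verts G \<and> w \<in> verts G \<and>
     (u, w) \<in> {(a, b). {a, b} \<in> edges G}\<^sup>*"

text \<open>A call state: current graph, current k, current F.\<close>
type_synonym 'a fstate = "'a graph \<times> int \<times> 'a set"

definition sG :: "'a fstate \<Rightarrow> 'a graph" where "sG st = fst st"
definition sk :: "'a fstate \<Rightarrow> int" where "sk st = fst (snd st)"
definition sF :: "'a fstate \<Rightarrow> 'a set" where "sF st = snd (snd st)"

text \<open>Events along an execution path: the vertex deleted in step 1, step 2, step 5
  (following the step-5 call), added to F in step 6 (following the step-6 call),
  or deleted in the loop of step 4 of the last call.\<close>
datatype 'a fvs_event = Ev1 'a | Ev2 'a | Ev5 'a | Ev6 'a | Ev4 'a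

fun apply_ev :: "'a fvs_event \<Rightarrow> 'a fstate \<Rightarrow> 'a fstate" where
  "apply_ev (Ev1 v) (G, k, F) = (del_verts G {v}, k, F - {v})"
| "apply_ev (Ev2 v) (G, k, F) = (del_verts G {v}, k - 1, F)"
| "apply_ev (Ev5 v) (G, k, F) = (del_verts G {v}, k - 1, F)"
| "apply_ev (Ev6 v) (G, k, F) = (G, k, F \<union> {v})"
| "apply_ev (Ev4 v) (G, k, F) = (del_verts G {v}, k, F)"

definition st_at :: "'a graph \<Rightarrow> int \<Rightarrow> 'a fvs_event list \<Rightarrow> nat \<Rightarrow> 'a fstate" where
  "st_at G k evs j = fold apply_ev (take j evs) (G, k, {})"

text \<open>Step 0 does not fire.\<close>
definition no_step0 :: "'a fstate \<Rightarrow> bool" where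
  "no_step0 st \<longleftrightarrow> sk st \<ge> 0 \<and> verts (sG st) \<noteq> {}"

definition step1_cond :: "'a fstate \<Rightarrow> 'a \<Rightarrow> bool" where
  "step1_cond st v \<longleftrightarrow> v \<in> verts (sG st) \<and> deg (sG st) v < 2"

definition step2_cond :: "'a fstate \<Rightarrow> 'a \<Rightarrow> bool" where
  "step2_cond st v \<longleftrightarrow> v \<in> verts (sG st) - sF st \<and>
     (\<exists>u w. u \<noteq> w \<and> u \<in> nbrs (sG st) v \<inter> sF st \<and> w \<in> nbrs (sG st) v \<inter> sF st \<and>
        connected_in (induced (sG st) (sF st)) u w)"

definition reaches_step3 :: "'a fstate \<Rightarrow> bool" where
  "reaches_step3 st \<longleftrightarrow> no_step0 st \<and> \<not> (\<exists>v. step1_cond st v) \<and> \<not> (\<exists>v. step2_cond st v)"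

text \<open>v is a legitimate choice in step 3 (a vertex of V(G) \ F of maximum degree).\<close>
definition max_choice :: "'a fstate \<Rightarrow> 'a \<Rightarrow> bool" where
  "max_choice st v \<longleftrightarrow> v \<in> verts (sG st) - sF st \<and>
     (\<forall>w \<in> verts (sG st) - sF st. deg (sG st) w \<le> deg (sG st) v)"

text \<open>Legality of an event of a non-final call (steps 1, 2, 5, 6).\<close>
fun legal_ev :: "'a fstate \<Rightarrow> 'a fvs_event \<Rightarrow> bool" where
  "legal_ev st (Ev1 v) \<longleftrightarrow> no_step0 st \<and> step1_cond st v"
| "legal_ev st (Ev2 v) \<longleftrightarrow> no_step0 st \<and> \<not> (\<exists>w. step1_cond st w) \<and> step2_cond st v"
| "legal_ev st (Ev5 v) \<longleftrightarrow> reaches_step3 st \<and> max_choice st v \<and> deg (sG st) v \<noteq> 2"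
| "legal_ev st (Ev6 v) \<longleftrightarrow> reaches_step3 st \<and> max_choice st v \<and> deg (sG st) v \<noteq> 2"
| "legal_ev st (Ev4 v) \<longleftrightarrow> False"

definition step4_applies :: "'a fstate \<Rightarrow> bool" where
  "step4_applies st \<longleftrightarrow> reaches_step3 st \<and> (\<exists>v. max_choice st v \<and> deg (sG st) v = 2)"

text \<open>One iteration of the loop of step 4: delete a vertex not in F lying on a cycle.\<close>
definition loop4_ok :: "'a fstate \<Rightarrow> 'a \<Rightarrow> bool" where
  "loop4_ok st x \<longleftrightarrow> x \<notin> sF st \<and> (\<exists>cs. is_cycle (sG st) cs \<and> x \<in> set cs)"

text \<open>The first m events are the recursive steps (1, 2, 5 or 6) of the calls c_0..c_{t-1};
  the call c_t = st_at G k evs m terminates either in step 0 (returning a set,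
  i.e. k >= 0) or in step 4, whose loop deletes the remaining events' vertices until
  no cycle remains, returning a set iff their number is at most k.\<close>
definition solution_path :: "'a graph \<Rightarrow> int \<Rightarrow> 'a fvs_event list \<Rightarrow> bool" where
  "solution_path G k evs \<longleftrightarrow> (\<exists>m \<le> length evs.
     (\<forall>j < m. legal_ev (st_at G k evs j) (evs ! j)) \<and>
     (\<forall>j. m \<le> j \<and> j < length evs \<longrightarrow>
         (\<exists>x. evs ! j = Ev4 x \<and> loop4_ok (st_at G k evs j) x)) \<and>
     ((m = length evs \<and> \<not> no_step0 (st_at G k evs m) \<and> sk (st_at G k evs m) \<ge> 0) \<or>
      (step4_applies (st_at G k evs m) \<and> \<not> has_cycle (sG (st_at G k evs (length evs))) \<and>
       int (length evs - m) \<le> sk (st_at G k evs m))))"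

text \<open>Events deleting a vertex of V_- (step 2, step 5, step-4 loop).\<close>
fun minus_ev :: "'a fvs_event \<Rightarrow> 'a option" where
  "minus_ev (Ev2 v) = Some v"
| "minus_ev (Ev5 v) = Some v"
| "minus_ev (Ev4 v) = Some v"
| "minus_ev _ = None"

definition Fprime :: "'a fvs_event list \<Rightarrow> 'a set" where
  "Fprime evs = {v. Ev6 v \<in> set evs}"

text \<open>For the V_- deletion at event index j (the graph G_i = st_at .. j), the index of the
  next V_- deletion, or the end of the path (giving G_{i+1}, resp. G_{s+1}).\<close>
definition next_minus :: "'a fvs_event list \<Rightarrow> nat \<Rightarrow> nat" where
  "next_minus evs j = (LEAST j'. j < j' \<and> (j' = length evs \<or> minus_ev (evs ! j') \<noteq> None))"

text \<open>Effective decrements delta(u, x_i), where x_i is deleted at event index j.\<close>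
definition eff_dec :: "'a graph \<Rightarrow> int \<Rightarrow> 'a fvs_event list \<Rightarrow> 'a \<Rightarrow> nat \<Rightarrow> int" where
  "eff_dec G k evs u j =
     (if u \<in> sF (st_at G k evs j)
      then int (max (deg (sG (st_at G k evs j)) u) 2)
           - int (max (deg (sG (st_at G k evs (next_minus evs j))) u) 2)
      else 0)"

end

theory Submission
  imports Defs
begin

text \<open>Only the vertices of \<open>F'\<close> that are already in \<open>F\<close> when \<open>x\<^sub>i\<close> is deleted count, and their
  effective decrements add up to the drop of \<open>\<Sum>\<^sub>u max(d(u), 2)\<close> between \<open>G\<^sub>i\<close> and \<open>G\<^sub>i\<^sub>+\<^sub>1\<close>.
  Deleting \<open>x\<^sub>i\<close> itself lowers each neighbour's degree by one, which accounts for \<open>d*(x\<^sub>i)\<close>.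
  If \<open>x\<^sub>i\<close> is deleted in the loop of step 4, nothing else happens before \<open>x\<^sub>i\<^sub>+\<^sub>1\<close>.
  Otherwise all degrees in \<open>G\<^sub>i\<close> are at least 2, and the following step-1 deletions of
  vertices of degree \<open>\<le> 1\<close> are paid for by the degree deficit \<open>\<Sum>\<^sub>v (2 - d(v))\<^sup>+\<close>: a step-1
  deletion removes \<open>2 - d(v) \<ge> d(v)\<close> units of deficit and creates at most one unit of deficit
  or of decrement per neighbour, so the potential \<open>decrements + deficit\<close> never grows.\<close>

lemma verts_del_verts [simp]: "verts (del_verts H S) = verts H - S"
  by (simp add: del_verts_def verts_def)

lemma edges_del_verts: "edges (del_verts H S) = {e \<in> edges H. e \<inter> S = {}}"
  by (simp add: del_verts_def edges_def)

lemma simple_graph_del_verts: "simple_graph H \<Longrightarrow> simple_graph (del_verts H S)"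
  unfolding simple_graph_def edges_del_verts by fastforce

lemma nbrs_commute: "w \<in> nbrs H v \<longleftrightarrow> v \<in> nbrs H w"
  by (simp add: nbrs_def insert_commute)

lemma nbrs_subset_verts: "simple_graph H \<Longrightarrow> nbrs H v \<subseteq> verts H"
  unfolding simple_graph_def nbrs_def by (auto simp: doubleton_eq_iff)

lemma nbrs_irrefl: "simple_graph H \<Longrightarrow> v \<notin> nbrs H v"
  unfolding simple_graph_def nbrs_def by (auto simp: doubleton_eq_iff)

lemma finite_nbrs: "simple_graph H \<Longrightarrow> finite (nbrs H v)"
  using nbrs_subset_verts simple_graph_def finite_subset by metis

lemma nbrs_del_verts: "w \<noteq> v \<Longrightarrow> nbrs (del_verts H {v}) w = nbrs H w - {v}"
  by (auto simp: nbrs_def edges_del_verts)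

lemma deg_del_vertex:
  assumes "simple_graph H" "w \<noteq> v"
  shows "deg (del_verts H {v}) w = deg H w - (if w \<in> nbrs H v then 1 else 0)"
proof (cases "w \<in> verts H")
  case True
  then show ?thesis using assms finite_nbrs[OF assms(1), of w]
    by (auto simp: deg_def nbrs_del_verts nbrs_commute)
next
  case False
  then show ?thesis using assms nbrs_subset_verts[OF assms(1), of v] by (auto simp: deg_def)
qed

lemma deg_del_vertex_self: "deg (del_verts H {v}) v = 0"
  by (simp add: deg_def)

lemma sum_nbrs_indicator:
  assumes "simple_graph H" "v \<in> verts H" "finite U" "verts H \<subseteq> U"
  shows "(\<Sum>w\<in>U. if w \<in> nbrs H v then 1 else 0) = deg H v"
proof -
  have "U \<inter> nbrs H v = nbrs H v" using nbrs_subset_verts[OF assms(1)] assms(4) by blast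
  then show ?thesis using assms(2,3) by (simp add: sum.If_cases deg_def)
qed

lemma sum_eq_sum_superset_indicator:
  assumes "finite U" "S \<subseteq> U"
  shows "sum f S = (\<Sum>w\<in>U. if w \<in> S then f w else 0)"
  using sum.inter_restrict[OF assms(1), of f S] assms(2) by (simp add: Int_absorb1)

definition clamped_degree_sum :: "'a set \<Rightarrow> 'a graph \<Rightarrow> nat" where
  "clamped_degree_sum A H = (\<Sum>w\<in>A. max (deg H w) 2)"

definition degree_deficit :: "'a graph \<Rightarrow> nat" where
  "degree_deficit H = (\<Sum>w\<in>verts H. 2 - deg H w)"

lemma degree_deficit_eq_0: "\<forall>w\<in>verts H. 2 \<le> deg H w \<Longrightarrow> degree_deficit H = 0"
  by (simp add: degree_deficit_def)

lemma clamped_degree_sum_del_vertex: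
  assumes sg: "simple_graph H" and "v \<in> verts H" "finite A" "v \<notin> A"
  shows "clamped_degree_sum A H \<le> clamped_degree_sum A (del_verts H {v}) + deg H v"
proof -
  let ?H' = "del_verts H {v}"
  define U where "U = A \<union> verts H"
  have fU: "finite U" using assms sg by (simp add: U_def simple_graph_def)
  have "clamped_degree_sum A H = (\<Sum>w\<in>U. if w \<in> A then max (deg H w) 2 else 0)"
    unfolding clamped_degree_sum_def by (rule sum_eq_sum_superset_indicator[OF fU]) (simp add: U_def)
  also have "\<dots> \<le> (\<Sum>w\<in>U. (if w \<in> A then max (deg ?H' w) 2 else 0) + (if w \<in> nbrs H v then 1 else 0))"
  proof (intro sum_mono)
    fix w
    show "(if w \<in> A then max (deg H w) 2 else 0)
        \<le> (if w \<in> A then max (deg ?H' w) 2 else 0) + (if w \<in> nbrs H v then 1 else 0)"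
      using deg_del_vertex[OF sg, of w v] \<open>v \<notin> A\<close> by (cases "w = v") auto
  qed
  also have "\<dots> = clamped_degree_sum A ?H' + deg H v"
    using sum_eq_sum_superset_indicator[OF fU, of A "\<lambda>w. max (deg ?H' w) 2"]
      sum_nbrs_indicator[OF sg assms(2) fU]
    by (simp add: sum.distrib clamped_degree_sum_def U_def)
  finally show ?thesis .
qed

lemma potential_del_vertex:
  assumes sg: "simple_graph H" and v: "v \<in> verts H" and "finite A"
    and vA: "v \<notin> A \<or> deg H v \<le> 2"
  shows "clamped_degree_sum A H + degree_deficit (del_verts H {v}) + (2 - deg H v)
    \<le> clamped_degree_sum A (del_verts H {v}) + degree_deficit H + deg H v"
proof -
  let ?H' = "del_verts H {v}"
  define U where "U = A \<union> verts H"
  have fU: "finite U" using assms by (simp add: U_def simple_graph_def)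
  have subU: "A \<subseteq> U" "verts H \<subseteq> U" "verts ?H' \<subseteq> U" by (auto simp: U_def)
  note as_sum = sum_eq_sum_superset_indicator[OF fU]
  let ?a = "\<lambda>H w. if w \<in> A then max (deg H w) 2 else 0"
  let ?b = "\<lambda>H w. if w \<in> verts H then 2 - deg H w else 0"
  \<comment> \<open>A neighbour loses clamped degree only if its degree is at least 3, and gains
    deficit only if its degree is at most 2, so it costs at most one unit in total.\<close>
  have pointwise: "?a H w + ?b ?H' w + (if w = v then 2 - deg H v else 0)
      \<le> ?a ?H' w + ?b H w + (if w \<in> nbrs H v then 1 else 0)" for w
  proof (cases "w = v")
    case True
    then show ?thesis using vA v nbrs_irrefl[OF sg, of v] by (auto simp: deg_del_vertex_self)
  next
    case False
    then show ?thesis using deg_del_vertex[OF sg False] nbrs_subset_verts[OF sg, of v] by auto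
  qed
  have "clamped_degree_sum A H + degree_deficit ?H' + (2 - deg H v)
      = (\<Sum>w\<in>U. ?a H w + ?b ?H' w + (if w = v then 2 - deg H v else 0))"
    using as_sum[OF subU(1), of "\<lambda>w. max (deg H w) 2"] as_sum[OF subU(3), of "\<lambda>w. 2 - deg ?H' w"]
      v subU(2) fU by (auto simp: sum.distrib clamped_degree_sum_def degree_deficit_def)
  also have "\<dots> \<le> (\<Sum>w\<in>U. ?a ?H' w + ?b H w + (if w \<in> nbrs H v then 1 else 0))"
    using pointwise by (rule sum_mono)
  also have "\<dots> = clamped_degree_sum A ?H' + degree_deficit H + deg H v"
    using as_sum[OF subU(1), of "\<lambda>w. max (deg ?H' w) 2"] as_sum[OF subU(2), of "\<lambda>w. 2 - deg H w"]
      sum_nbrs_indicator[OF sg v fU subU(2)]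
    by (simp add: sum.distrib clamped_degree_sum_def degree_deficit_def)
  finally show ?thesis .
qed

lemma st_at_Suc: "i < length evs \<Longrightarrow> st_at G k evs (Suc i) = apply_ev (evs ! i) (st_at G k evs i)"
  by (simp add: st_at_def take_Suc_conv_app_nth)

lemma sG_apply_ev_minus: "minus_ev e = Some v \<Longrightarrow> sG (apply_ev e st) = del_verts (sG st) {v}"
  by (cases e; cases st) (auto simp: sG_def)

lemma simple_graph_st_at:
  assumes "simple_graph G" "i \<le> length evs"
  shows "simple_graph (sG (st_at G k evs i))"
  using assms(2)
proof (induction i)
  case 0
  then show ?case using assms(1) by (simp add: st_at_def sG_def)
next
  case (Suc i)
  then have "simple_graph (sG (st_at G k evs i))" by simp
  then show ?case using Suc.prems
    by (cases "evs ! i"; cases "st_at G k evs i") (auto simp: st_at_Suc sG_def simple_graph_del_verts)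
qed

lemma legal_ev_minus_vertex:
  assumes "legal_ev st e" "minus_ev e = Some x"
  shows "x \<in> verts (sG st) - sF st" "\<forall>w\<in>verts (sG st). 2 \<le> deg (sG st) w"
  using assms
  by (cases e; force simp: step1_cond_def step2_cond_def reaches_step3_def max_choice_def)+

lemma loop4_ok_vertex: "loop4_ok st x \<Longrightarrow> x \<in> verts (sG st) - sF st"
  by (auto simp: loop4_ok_def is_cycle_def)

lemma legal_ev_potential_step:
  assumes sg: "simple_graph (sG st)" and "finite A" "legal_ev st e" "minus_ev e = None"
  shows "clamped_degree_sum A (sG st) + degree_deficit (sG (apply_ev e st))
    \<le> clamped_degree_sum A (sG (apply_ev e st)) + degree_deficit (sG st)"
proof (cases e)
  case (Ev1 v)
  then have v: "v \<in> verts (sG st)" "deg (sG st) v < 2"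
    using assms(3) by (auto simp: step1_cond_def)
  moreover have "sG (apply_ev e st) = del_verts (sG st) {v}"
    using Ev1 by (cases st) (simp add: sG_def)
  ultimately show ?thesis using potential_del_vertex[OF sg v(1) assms(2)] by simp
next
  case (Ev6 v)
  then show ?thesis by (cases st) (simp add: sG_def)
qed (use assms in auto)

lemma potential_mono_on_path:
  assumes "simple_graph G" "finite A" "j \<le> i" "i \<le> length evs"
    and "\<And>l. j \<le> l \<Longrightarrow> l < i \<Longrightarrow> legal_ev (st_at G k evs l) (evs ! l) \<and> minus_ev (evs ! l) = None"
  shows "clamped_degree_sum A (sG (st_at G k evs j)) + degree_deficit (sG (st_at G k evs i))
    \<le> clamped_degree_sum A (sG (st_at G k evs i)) + degree_deficit (sG (st_at G k evs j))"
  using assms(3-5)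
proof (induction i rule: dec_induct)
  case base
  then show ?case by simp
next
  case (step i)
  have "simple_graph (sG (st_at G k evs i))" using simple_graph_st_at[OF assms(1)] step.prems by simp
  then have "clamped_degree_sum A (sG (st_at G k evs i)) + degree_deficit (sG (st_at G k evs (Suc i)))
    \<le> clamped_degree_sum A (sG (st_at G k evs (Suc i))) + degree_deficit (sG (st_at G k evs i))"
    using legal_ev_potential_step[OF _ assms(2)] step.hyps step.prems by (simp add: st_at_Suc)
  then show ?case using step by simp
qed

lemma next_minus_bounds:
  assumes "j < length evs"
  shows "j < next_minus evs j" "next_minus evs j \<le> length evs"
proof -
  let ?P = "\<lambda>j'. j < j' \<and> (j' = length evs \<or> minus_ev (evs ! j') \<noteq> None)"
  have "?P (length evs)" using assms by simp
  then show "j < next_minus evs j" "next_minus evs j \<le> length evs"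
    unfolding next_minus_def using LeastI[of ?P] Least_le[of ?P] by blast+
qed

lemma minus_ev_before_next_minus:
  assumes "j < length evs" "j < i" "i < next_minus evs j"
  shows "minus_ev (evs ! i) = None"
proof -
  have "\<not> (j < i \<and> (i = length evs \<or> minus_ev (evs ! i) \<noteq> None))"
    using assms(3) unfolding next_minus_def by (rule not_less_Least)
  then show ?thesis using assms next_minus_bounds(2)[OF assms(1)] by auto
qed

lemma next_minus_eq_Suc:
  assumes "j < length evs" "Suc j = length evs \<or> minus_ev (evs ! Suc j) \<noteq> None"
  shows "next_minus evs j = Suc j"
proof -
  have "next_minus evs j \<le> Suc j" unfolding next_minus_def by (rule Least_le) (use assms(2) in auto)
  then show ?thesis using next_minus_bounds(1)[OF assms(1)] by simp
qed

lemma clamped_degree_sum_drop_le_deg: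
  assumes sg: "simple_graph G" and path: "solution_path G k evs" and j: "j < length evs"
    and x: "minus_ev (evs ! j) = Some x" and fin: "finite A" and AF: "A \<subseteq> sF (st_at G k evs j)"
  shows "clamped_degree_sum A (sG (st_at G k evs j))
    \<le> clamped_degree_sum A (sG (st_at G k evs (next_minus evs j))) + deg (sG (st_at G k evs j)) x"
proof -
  obtain m where legal: "\<And>i. i < m \<Longrightarrow> legal_ev (st_at G k evs i) (evs ! i)"
    and loop: "\<And>i. m \<le> i \<Longrightarrow> i < length evs \<Longrightarrow> \<exists>y. evs ! i = Ev4 y \<and> loop4_ok (st_at G k evs i) y"
    using path unfolding solution_path_def by blast
  define H where "H i = sG (st_at G k evs i)" for i
  define n where "n = next_minus evs j"
  have sgj: "simple_graph (H j)" using simple_graph_st_at[OF sg] j by (simp add: H_def)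
  have del: "H (Suc j) = del_verts (H j) {x}"
    using st_at_Suc[OF j] sG_apply_ev_minus[OF x] by (simp add: H_def)
  show ?thesis
  proof (cases "j < m")
    case True
    note xv = legal_ev_minus_vertex[OF legal[OF True] x]
    have "x \<notin> A" using xv(1) AF by blast
    then have "clamped_degree_sum A (H j) + degree_deficit (H (Suc j))
        \<le> clamped_degree_sum A (H (Suc j)) + degree_deficit (H j) + deg (H j) x"
      using potential_del_vertex[OF sgj _ fin, of x] xv(1) del by (auto simp: H_def)
    moreover have "clamped_degree_sum A (H (Suc j)) + degree_deficit (H n)
        \<le> clamped_degree_sum A (H n) + degree_deficit (H (Suc j))"
      unfolding H_def
    proof (rule potential_mono_on_path[OF sg fin])
      show "Suc j \<le> n" "n \<le> length evs" using next_minus_bounds[OF j] by (simp_all add: n_def)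
      fix l assume l: "Suc j \<le> l" "l < n"
      then have none: "minus_ev (evs ! l) = None"
        using minus_ev_before_next_minus[OF j] by (simp add: n_def)
      moreover have "l < m"
        using loop[of l] none l \<open>n \<le> length evs\<close> by (cases "m \<le> l") auto
      ultimately show "legal_ev (st_at G k evs l) (evs ! l) \<and> minus_ev (evs ! l) = None"
        using legal by simp
    qed
    moreover have "degree_deficit (H j) = 0"
      using xv(2) degree_deficit_eq_0 by (simp add: H_def)
    ultimately show ?thesis by (simp add: H_def n_def)
  next
    case False
    then obtain y where "evs ! j = Ev4 y" "loop4_ok (st_at G k evs j) y" using loop[of j] j by auto
    then have xv: "x \<in> verts (H j) - sF (st_at G k evs j)"
      using loop4_ok_vertex[of "st_at G k evs j" y] x by (simp add: H_def)
    have "Suc j = length evs \<or> minus_ev (evs ! Suc j) \<noteq> None"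
      using loop[of "Suc j"] False j by (cases "Suc j < length evs") auto
    then have "n = Suc j" using next_minus_eq_Suc[OF j] by (simp add: n_def)
    then show ?thesis
      using clamped_degree_sum_del_vertex[OF sgj _ fin, of x] xv AF del by (auto simp: H_def n_def)
  qed
qed

lemma finite_Fprime: "finite (Fprime evs)"
proof -
  have "Fprime evs = Ev6 -` set evs" by (auto simp: Fprime_def)
  then show ?thesis by (simp add: finite_vimageI inj_def)
qed

lemma sum_eff_dec_eq:
  "(\<Sum>u\<in>Fprime evs. eff_dec G k evs u j)
    = int (clamped_degree_sum (Fprime evs \<inter> sF (st_at G k evs j)) (sG (st_at G k evs j)))
      - int (clamped_degree_sum (Fprime evs \<inter> sF (st_at G k evs j))
              (sG (st_at G k evs (next_minus evs j))))"
    (is "_ = int (clamped_degree_sum ?A _) - _")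
proof -
  have "(\<Sum>u\<in>Fprime evs. eff_dec G k evs u j) = (\<Sum>u\<in>?A. eff_dec G k evs u j)"
    unfolding sum.inter_restrict[OF finite_Fprime] by (rule sum.cong) (simp_all add: eff_dec_def)
  then show ?thesis by (simp add: eff_dec_def clamped_degree_sum_def sum_subtractf)
qed

theorem mainTheorem5:
  fixes G :: "'a graph" and k :: int and evs :: "'a fvs_event list"
    and j :: nat and x :: 'a
  assumes "simple_graph G"
    and "solution_path G k evs"
    and "j < length evs"
    and "minus_ev (evs ! j) = Some x"
  shows "(\<Sum>u \<in> Fprime evs. eff_dec G k evs u j) \<le> int (deg (sG (st_at G k evs j)) x)"
proof -
  let ?A = "Fprime evs \<inter> sF (st_at G k evs j)"
  have "clamped_degree_sum ?A (sG (st_at G k evs j))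
    \<le> clamped_degree_sum ?A (sG (st_at G k evs (next_minus evs j))) + deg (sG (st_at G k evs j)) x"
    using clamped_degree_sum_drop_le_deg[OF assms] finite_Fprime by blast
  then show ?thesis unfolding sum_eff_dec_eq by linarith
qed

end
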